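(* Let $U$ be a convex $2n$-gon with distinct vertices $U_1,\dots,U_{2n}$ in counterclockwise order, centered at the origin ($U_{i+n}=-U_i$, indices modulo $2n$), and let $P$ be a convex polygon with nonempty interior with vertex list $P_1,\dots,P_{2n}$ (consecutive entries may coincide) whose sides are parallel to the corresponding sides of $U$, i.e. $P_{i+1}-P_i=\lambda_{i+\frac12}(U_{i+1}-U_i)$ with $\lambda_{i+\frac12}\ge0$ for all $i$. The following statements are equivalent: (1) $P$ has constant $U$-width; (2) $P+(-P)$ is homothetic to $U$; (3) the corresponding diagonals of $U$ and $P$ are parallel, i.e. $P_i-P_{i+n}\parallel U_i-U_{i+n}$ for $1\le i\le n$; (4) there is a constant $a$ with $P_i-P_{i+n}=2a(U_i-U_{i+n})$ for $1\le i\le n$.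
   Context: The dual norm of the norm with unit ball $U$ is identified with $\|v\|=\sup\{[u,v]:u\in U\}$, where $[x,y]$ is the determinant of the matrix with columns $x,y$. For $\|v\|=1$, $h(P)(v)=\sup\{[p,v]:p\in P\}$ and $w(P)(v)=h(P)(v)+h(P)(-v)$; $P$ has constant $U$-width if $w(P)(v)$ is independent of $v$. *)

theory Defs
  imports "HOL-Analysis.Analysis"
begin

definition det2 :: "real^2 \<Rightarrow> real^2 \<Rightarrow> real" where
  "det2 x y = x$1 * y$2 - x$2 * y$1"

text \<open>Dual norm of the norm with unit ball K: sup of [u,v] over u in K.\<close>
definition dual_norm :: "(real^2) set \<Rightarrow> real^2 \<Rightarrow> real" where
  "dual_norm K v = Sup ((\<lambda>u. det2 u v) ` K)"

definition supp :: "(real^2) set \<Rightarrow> real^2 \<Rightarrow> real" where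
  "supp P v = Sup ((\<lambda>p. det2 p v) ` P)"

definition width :: "(real^2) set \<Rightarrow> real^2 \<Rightarrow> real" where
  "width P v = supp P v + supp P (- v)"

definition const_width :: "(real^2) set \<Rightarrow> (real^2) set \<Rightarrow> bool" where
  "const_width U P \<longleftrightarrow> (\<exists>c. \<forall>v. dual_norm U v = 1 \<longrightarrow> width P v = c)"

definition homothetic :: "(real^2) set \<Rightarrow> (real^2) set \<Rightarrow> bool" where
  "homothetic A B \<longleftrightarrow> (\<exists>a t. a \<noteq> 0 \<and> A = (\<lambda>x. t + a *\<^sub>R x) ` B)"

definition parallel :: "real^2 \<Rightarrow> real^2 \<Rightarrow> bool" where
  "parallel x y \<longleftrightarrow> det2 x y = 0"

end

theory Submission
  imports Defs
begin

text \<open>Every polygon whose sides are nonnegative multiples of the sides of \<open>U\<close>, in the same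
  cyclic order, is supported in direction \<open>v\<close> at a vertex index \<open>J\<close> that depends only on \<open>U\<close>
  and \<open>v\<close>, with the opposite support at \<open>J + n\<close>. Hence the \<open>U\<close>-norm of \<open>v\<close> is \<open>[U J, v]\<close>,
  the width of \<open>P\<close> in direction \<open>v\<close> is \<open>[P J - P (J + n), v]\<close>, and \<open>P + (-P)\<close> is supported
  at \<open>P J - P (J + n)\<close>. So all four conditions amount to \<open>P j - P (j + n) = c U j\<close> for a
  constant \<open>c\<close>: constant width, evaluated at the normals of the sides of \<open>U\<close>, forces this because
  consecutive diagonals differ by a multiple of the side between them, and the same observation
  propagates parallelism of the diagonals around the polygon.\<close>

lemma det2_add_left [simp]: "det2 (x + y) v = det2 x v + det2 y v"
  by (simp add: det2_def algebra_simps)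
lemma det2_add_right [simp]: "det2 v (x + y) = det2 v x + det2 v y"
  by (simp add: det2_def algebra_simps)
lemma det2_diff_left [simp]: "det2 (x - y) v = det2 x v - det2 y v"
  by (simp add: det2_def algebra_simps)
lemma det2_diff_right [simp]: "det2 v (x - y) = det2 v x - det2 v y"
  by (simp add: det2_def algebra_simps)
lemma det2_minus_left [simp]: "det2 (- x) v = - det2 x v"
  by (simp add: det2_def)
lemma det2_minus_right [simp]: "det2 v (- x) = - det2 v x"
  by (simp add: det2_def)
lemma det2_scaleR_left [simp]: "det2 (c *\<^sub>R x) v = c * det2 x v"
  by (simp add: det2_def algebra_simps)
lemma det2_scaleR_right [simp]: "det2 v (c *\<^sub>R x) = c * det2 v x"
  by (simp add: det2_def algebra_simps)
lemma det2_self [simp]: "det2 x x = 0"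
  by (simp add: det2_def)
lemma det2_zero_left [simp]: "det2 0 x = 0"
  by (simp add: det2_def)
lemma det2_zero_right [simp]: "det2 x 0 = 0"
  by (simp add: det2_def)
lemma det2_commute: "det2 x y = - det2 y x"
  by (simp add: det2_def)

text \<open>If \<open>a\<close> lies in the cone spanned by \<open>b\<close> and \<open>c\<close> (positively oriented), then every
  \<open>X\<close> weakly left of both \<open>b\<close> and \<open>c\<close> is weakly left of \<open>a\<close>, by the identity
  \<open>[b,c] [X,a] = [a,c] [X,b] + [b,a] [X,c]\<close>.\<close>
lemma det2_cone_nonpos:
  assumes "det2 b c > 0" "det2 b a \<ge> 0" "det2 c a \<le> 0" "det2 X b \<le> 0" "det2 X c \<le> 0"
  shows "det2 X a \<le> 0"
proof -
  have "det2 b c * det2 X a = - det2 c a * det2 X b + det2 b a * det2 X c"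
    by (simp add: det2_def algebra_simps)
  also have "\<dots> \<le> 0"
    using assms by (intro add_nonpos_nonpos mult_nonneg_nonpos) auto
  finally show ?thesis
    using assms(1) by (simp add: mult_le_0_iff)
qed

lemma det2_eq_0_imp_scaleR:
  "det2 a b \<noteq> 0 \<Longrightarrow> det2 y a = 0 \<Longrightarrow> y = (det2 y b / det2 a b) *\<^sub>R a"
  by (simp add: vec_eq_iff forall_2 det2_def field_simps)

lemma det2_eq_0_imp_zero:
  "det2 a b \<noteq> 0 \<Longrightarrow> det2 y a = 0 \<Longrightarrow> det2 y b = 0 \<Longrightarrow> y = 0"
  using det2_eq_0_imp_scaleR[of a b y] by simp

lemma det2_le_on_convex_hull:
  assumes "\<forall>y\<in>S. det2 y v \<le> b" "x \<in> convex hull S"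
  shows "det2 x v \<le> b"
proof -
  have "convex {x. det2 x v \<le> b}"
    unfolding convex_def
  proof (intro ballI allI impI)
    fix x y and u w :: real
    assume "x \<in> {x. det2 x v \<le> b}" "y \<in> {x. det2 x v \<le> b}" "0 \<le> u" "0 \<le> w" "u + w = 1"
    then have "u * det2 x v + w * det2 y v \<le> u * b + w * b"
      by (intro add_mono mult_left_mono) auto
    with \<open>u + w = 1\<close> show "u *\<^sub>R x + w *\<^sub>R y \<in> {x. det2 x v \<le> b}"
      by (simp add: distrib_right[symmetric])
  qed
  then have "convex hull S \<subseteq> {x. det2 x v \<le> b}"
    using assms(1) by (intro hull_minimal) auto
  with assms(2) show ?thesis by auto
qed

lemma subset_convex_compact_by_det2:
  assumes "convex B" "compact B" "\<And>v. \<exists>b\<in>B. \<forall>x\<in>A. det2 x v \<le> det2 b v"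
  shows "A \<subseteq> B"
proof
  fix x assume "x \<in> A"
  show "x \<in> B"
  proof (rule ccontr)
    assume "x \<notin> B"
    then obtain a \<beta> where "inner a x < \<beta>" "\<forall>y\<in>B. inner a y > \<beta>"
      using separating_hyperplane_closed_point[OF assms(1) compact_imp_closed[OF assms(2)]] by blast
    moreover define v :: "real^2" where "v = (\<chi> i. if i = 1 then a$2 else - a$1)"
    have "det2 y v = - inner a y" for y
      by (simp add: det2_def v_def inner_vec_def sum_2 algebra_simps)
    moreover obtain b where "b \<in> B" "det2 x v \<le> det2 b v"
      using assms(3) \<open>x \<in> A\<close> by blast
    ultimately show False by fastforce
  qed
qed

lemma antiperiodic_sign_change:
  fixes s :: "nat \<Rightarrow> real"
  assumes "\<And>j. s (j + n) = - s j"
  shows "\<exists>j. s j \<ge> 0 \<and> s (Suc j) \<le> 0"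
proof (cases "\<exists>j0. s j0 > 0")
  case True
  then obtain j0 where j0: "s j0 > 0" by blast
  have ex: "\<exists>d. s (j0 + d) \<le> 0"
    using assms[of j0] j0 by (intro exI[of _ n]) simp
  define d where "d = (LEAST d. s (j0 + d) \<le> 0)"
  have d: "s (j0 + d) \<le> 0"
    unfolding d_def by (rule LeastI_ex[OF ex])
  with j0 obtain d' where d': "d = Suc d'"
    by (cases d) auto
  have "\<not> s (j0 + d') \<le> 0"
    using not_less_Least[of d' "\<lambda>d. s (j0 + d) \<le> 0"] d' d_def by simp
  with d d' show ?thesis
    by (intro exI[of _ "j0 + d'"]) auto
next
  case False
  then have "s (0 + n) \<le> 0" "s (Suc 0) \<le> 0"
    by (auto simp: not_less)
  then show ?thesis
    using assms[of 0] by (intro exI[of _ 0]) simp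
qed

lemma mod_neq_if_close: "(a::nat) < b \<Longrightarrow> b < a + N \<Longrightarrow> b mod N \<noteq> a mod N"
  using mod_eq_dvd_iff_nat[of a b N] dvd_imp_le[of N "b - a"] by auto

lemma mod_shift_exists:
  assumes "(0::nat) < N"
  shows "\<exists>t<N. (i + t) mod N = k mod N"
proof (intro exI conjI)
  have "i mod N + (N - i mod N) = N"
    using assms by simp
  then have "(i + (k + (N - i mod N))) mod N = k mod N"
    by (metis add.commute add.left_commute mod_add_left_eq mod_add_self2)
  then show "(i + (k + (N - i mod N)) mod N) mod N = k mod N"
    by (simp add: mod_add_right_eq)
qed (use assms in simp)

locale symmetric_convex_polygon =
  fixes n :: nat and U :: "nat \<Rightarrow> real^2"
  assumes n_ge_2: "n \<ge> 2"
    and convex_ccw: "\<forall>i<2*n. \<forall>j<2*n. j \<noteq> i \<and> j \<noteq> (i+1) mod (2*n) \<longrightarrow>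
                          det2 (U ((i+1) mod (2*n)) - U i) (U j - U i) > 0"
    and symmetric: "\<forall>i<2*n. U ((i+n) mod (2*n)) = - U i"
begin

definition Uc :: "nat \<Rightarrow> real^2" where "Uc j = U (j mod (2*n))"

definition edge :: "nat \<Rightarrow> real^2" where "edge j = Uc (Suc j) - Uc j"

lemma two_n_pos: "0 < 2*n"
  using n_ge_2 by simp

lemma Suc_mod_mod: "(k mod (2*n) + 1) mod (2*n) = Suc k mod (2*n)"
  by (simp add: mod_Suc_eq)

lemma Uc_mod: "Uc (j mod (2*n)) = Uc j"
  by (simp add: Uc_def)

lemma Uc_periodic: "Uc (j + 2*n) = Uc j"
  by (simp add: Uc_def)

lemma Uc_antipodal: "Uc (j + n) = - Uc j"
proof -
  have "(j + n) mod (2*n) = (j mod (2*n) + n) mod (2*n)"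
    by (simp add: mod_add_left_eq)
  then show ?thesis
    using symmetric two_n_pos by (simp add: Uc_def)
qed

lemma edge_antipodal: "edge (j + n) = - edge j"
  using Uc_antipodal[of "Suc j"] Uc_antipodal[of j] by (simp add: edge_def)

lemma det2_edge_vertex_pos:
  assumes "Suc k < j" "j < k + 2*n"
  shows "det2 (edge k) (Uc j - Uc k) > 0"
proof -
  have "j mod (2*n) \<noteq> k mod (2*n)" "j mod (2*n) \<noteq> Suc k mod (2*n)"
    using mod_neq_if_close[of k j "2*n"] mod_neq_if_close[of "Suc k" j "2*n"] assms by auto
  then have "det2 (U ((k mod (2*n) + 1) mod (2*n)) - U (k mod (2*n)))
                  (U (j mod (2*n)) - U (k mod (2*n))) > 0"
    by (intro convex_ccw[rule_format]) (use n_ge_2 in \<open>simp_all add: mod_Suc_eq\<close>)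
  then show ?thesis
    by (simp only: edge_def Uc_def Suc_mod_mod)
qed

lemma det2_edge_vertex_nonneg:
  assumes "k \<le> j" "j < k + 2*n"
  shows "det2 (edge k) (Uc j - Uc k) \<ge> 0"
proof -
  consider "j = k" | "j = Suc k" | "Suc k < j"
    using assms(1) by linarith
  then show ?thesis
  proof cases
    case 3
    with assms(2) show ?thesis
      using det2_edge_vertex_pos[of k j] by simp
  qed (simp_all add: edge_def[symmetric])
qed

lemma det2_vertex_edge_pos: "det2 (Uc i) (edge i) > 0"
proof -
  have "det2 (edge i) (Uc (i + n) - Uc i) > 0"
    using n_ge_2 by (intro det2_edge_vertex_pos) auto
  moreover have "det2 (edge i) (Uc (i + n) - Uc i) = 2 * det2 (Uc i) (edge i)"
    by (simp add: Uc_antipodal det2_def)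
  ultimately show ?thesis
    by simp
qed

lemma det2_consecutive_edges_pos: "det2 (edge i) (edge (Suc i)) > 0"
proof -
  have "det2 (edge i) (Uc (Suc (Suc i)) - Uc i) > 0"
    using n_ge_2 by (intro det2_edge_vertex_pos) auto
  moreover have "Uc (Suc (Suc i)) - Uc i = edge i + edge (Suc i)"
    by (simp add: edge_def)
  ultimately show ?thesis
    by simp
qed

lemma edge_nonzero: "edge i \<noteq> 0"
  using det2_consecutive_edges_pos[of i] by auto

text \<open>Otherwise \<open>- edge i\<close> would lie in the cone between \<open>edge (m - 1)\<close> and \<open>edge m\<close>, and the
  vertex \<open>Uc (i + n)\<close>, being left of these two edges as seen from \<open>Uc m\<close>, would not be
  strictly left of \<open>edge i\<close>.\<close>
lemma det2_edges_pos: "Suc d < n \<Longrightarrow> det2 (edge i) (edge (i + Suc d)) > 0"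
proof (induction d)
  case 0
  then show ?case
    using det2_consecutive_edges_pos[of i] by simp
next
  case (Suc d)
  define p where "p = i + Suc d"
  define m where "m = Suc p"
  define X where "X = Uc (i + n) - Uc m"
  have "Uc (i + n) - Uc p = X + edge p"
    by (simp add: X_def m_def edge_def)
  moreover have "det2 (edge p) (Uc (i + n) - Uc p) > 0"
    using Suc.prems by (intro det2_edge_vertex_pos) (auto simp: p_def)
  ultimately have "det2 X (edge p) < 0"
    using det2_commute[of X "edge p"] by simp
  moreover have "det2 X (edge m) \<le> 0"
  proof -
    have "det2 (edge m) X \<ge> 0"
      unfolding X_def using Suc.prems by (intro det2_edge_vertex_nonneg) (auto simp: m_def p_def)
    then show ?thesis
      using det2_commute[of X "edge m"] by simp
  qed
  moreover have "det2 (edge p) (edge m) > 0"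
    unfolding m_def by (rule det2_consecutive_edges_pos)
  moreover have "det2 (edge p) (- edge i) \<ge> 0"
    using Suc.IH Suc.prems det2_commute[of "edge i" "edge p"] by (simp add: p_def)
  moreover have "det2 (edge i) X > 0"
  proof -
    have "det2 (edge (i + n)) (Uc (m + 2*n) - Uc (i + n)) > 0"
      using Suc.prems by (intro det2_edge_vertex_pos) (auto simp: m_def p_def)
    then show ?thesis
      by (simp add: X_def edge_antipodal Uc_periodic)
  qed
  ultimately have "\<not> det2 (edge m) (- edge i) \<le> 0"
    using det2_cone_nonpos[of "edge p" "edge m" "- edge i" X] det2_commute[of X "edge i"] by force
  then show ?case
    using det2_commute[of "edge i" "edge m"] by (simp add: m_def p_def)
qed

lemma det2_edges_nonneg: "d < n \<Longrightarrow> det2 (edge i) (edge (i + d)) \<ge> 0"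
  using det2_edges_pos[of "d - 1" i] by (cases d) auto

definition edges_parallel :: "(nat \<Rightarrow> real^2) \<Rightarrow> (nat \<Rightarrow> real) \<Rightarrow> bool" where
  "edges_parallel Q l \<longleftrightarrow>
     (\<forall>j. Q (j mod (2*n)) = Q j) \<and> (\<forall>j. l j \<ge> 0 \<and> Q (Suc j) = Q j + l j *\<^sub>R edge j)"

lemma edges_parallel_Uc: "edges_parallel Uc (\<lambda>_. 1)"
  by (simp add: edges_parallel_def Uc_mod edge_def)

context
  fixes Q :: "nat \<Rightarrow> real^2" and l :: "nat \<Rightarrow> real"
  assumes Q: "edges_parallel Q l"
begin

lemma edges_parallel_mod: "Q (j mod (2*n)) = Q j"
  using Q by (simp add: edges_parallel_def)

lemma edges_parallel_periodic: "Q (j + 2*n) = Q j"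
  by (metis edges_parallel_mod mod_add_self2)

lemma edges_parallel_step: "Q (Suc j) = Q j + l j *\<^sub>R edge j" and edges_parallel_nonneg: "l j \<ge> 0"
  using Q by (simp_all add: edges_parallel_def)

lemma edges_parallel_forward: "d \<le> n \<Longrightarrow> det2 (Q (i + d)) (edge i) \<le> det2 (Q i) (edge i)"
proof (induction d)
  case (Suc d)
  have "det2 (edge (i + d)) (edge i) \<le> 0"
    using det2_edges_nonneg[of d i] Suc.prems det2_commute[of "edge i" "edge (i + d)"] by simp
  then have "l (i + d) * det2 (edge (i + d)) (edge i) \<le> 0"
    by (intro mult_nonneg_nonpos edges_parallel_nonneg)
  with Suc show ?case
    by (simp add: edges_parallel_step)
qed simp

lemma edges_parallel_backward:
  "d \<le> n \<Longrightarrow> det2 (Q (i + 2*n - d)) (edge i) \<le> det2 (Q i) (edge i)"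
proof (induction d)
  case 0
  then show ?case
    by (simp add: edges_parallel_periodic)
next
  case (Suc d)
  define j where "j = i + 2*n - Suc d"
  have Suc_j: "Suc j = i + 2*n - d"
    using Suc.prems by (simp add: j_def)
  have "j = i + (n - Suc d) + n"
    using Suc.prems by (simp add: j_def)
  then have "edge j = - edge (i + (n - Suc d))"
    by (simp only: edge_antipodal)
  then have "det2 (edge j) (edge i) \<ge> 0"
    using det2_edges_nonneg[of "n - Suc d" i] Suc.prems det2_commute[of "edge i" "edge (i + (n - Suc d))"]
    by simp
  then have "l j * det2 (edge j) (edge i) \<ge> 0"
    by (intro mult_nonneg_nonneg edges_parallel_nonneg)
  moreover have "Q j = Q (Suc j) - l j *\<^sub>R edge j"
    by (simp add: edges_parallel_step)
  ultimately show ?case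
    using Suc Suc_j by (simp add: j_def[symmetric])
qed

lemma edges_parallel_max_at_edge: "det2 (Q k) (edge i) \<le> det2 (Q i) (edge i)"
proof -
  obtain t where t: "t < 2*n" "(i + t) mod (2*n) = k mod (2*n)"
    using mod_shift_exists two_n_pos by blast
  then have "Q k = Q (i + t)"
    by (metis edges_parallel_mod)
  moreover have "det2 (Q (i + t)) (edge i) \<le> det2 (Q i) (edge i)"
  proof (cases "t \<le> n")
    case False
    then have "i + 2*n - (2*n - t) = i + t"
      using t by simp
    with False t show ?thesis
      using edges_parallel_backward[of "2*n - t" i] by simp
  qed (rule edges_parallel_forward)
  ultimately show ?thesis
    by simp
qed

lemma edges_parallel_max_at_edge_Suc: "det2 (Q k) (edge i) \<le> det2 (Q (Suc i)) (edge i)"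
  using edges_parallel_max_at_edge[of k i] by (simp add: edges_parallel_step)

lemma edges_parallel_min_at_edge: "det2 (Q (i + n)) (edge i) \<le> det2 (Q k) (edge i)"
  using edges_parallel_max_at_edge[of k "i + n"] by (simp add: edge_antipodal)

lemma edges_parallel_min_at_edge_Suc: "det2 (Q (Suc i + n)) (edge i) \<le> det2 (Q k) (edge i)"
  using edges_parallel_max_at_edge_Suc[of k "i + n"] by (simp add: edge_antipodal)

end

text \<open>\<open>J\<close> is the vertex between two consecutive edges at which \<open>[edge j, v]\<close> changes sign;
  it depends only on the edge directions.\<close>
lemma common_extremal_vertex:
  "\<exists>J. \<forall>Q l. edges_parallel Q l \<longrightarrow>
      (\<forall>k. det2 (Q (J + n)) v \<le> det2 (Q k) v \<and> det2 (Q k) v \<le> det2 (Q J) v)"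
proof -
  obtain j where j: "det2 (edge j) v \<ge> 0" "det2 (edge (Suc j)) v \<le> 0"
    using antiperiodic_sign_change[of "\<lambda>j. det2 (edge j) v" n] by (auto simp: edge_antipodal)
  have turn: "det2 (edge j) (edge (Suc j)) > 0"
    by (rule det2_consecutive_edges_pos)
  show ?thesis
  proof (intro exI[of _ "Suc j"] allI impI conjI)
    fix Q l k assume Q: "edges_parallel Q l"
    have "det2 (Q k - Q (Suc j)) v \<le> 0"
      using edges_parallel_max_at_edge_Suc[OF Q, of k j] edges_parallel_max_at_edge[OF Q, of k "Suc j"]
      by (intro det2_cone_nonpos[OF turn j]) auto
    then show "det2 (Q k) v \<le> det2 (Q (Suc j)) v"
      by simp
    have "det2 (Q (Suc j + n) - Q k) v \<le> 0"
      using edges_parallel_min_at_edge_Suc[OF Q, of j k] edges_parallel_min_at_edge[OF Q, of "Suc j" k]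
      by (intro det2_cone_nonpos[OF turn j]) auto
    then show "det2 (Q (Suc j + n)) v \<le> det2 (Q k) v"
      by simp
  qed
qed

end

locale parallel_polygon = symmetric_convex_polygon +
  fixes P :: "nat \<Rightarrow> real^2" and lam :: "nat \<Rightarrow> real"
  assumes sides: "\<forall>i<2*n. lam i \<ge> 0 \<and>
                    P ((i+1) mod (2*n)) - P i = lam i *\<^sub>R (U ((i+1) mod (2*n)) - U i)"
begin

definition Pc :: "nat \<Rightarrow> real^2" where "Pc j = P (j mod (2*n))"

definition lc :: "nat \<Rightarrow> real" where "lc j = lam (j mod (2*n))"

definition UU :: "(real^2) set" where "UU = convex hull (U ` {..<2*n})"

definition PP :: "(real^2) set" where "PP = convex hull (P ` {..<2*n})"

definition DD :: "(real^2) set" where "DD = {p + q | p q. p \<in> PP \<and> q \<in> uminus ` PP}"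

lemma edges_parallel_Pc: "edges_parallel Pc lc"
proof -
  have "lc j \<ge> 0 \<and> Pc (Suc j) = Pc j + lc j *\<^sub>R edge j" for j
  proof -
    have "lam (j mod (2*n)) \<ge> 0 \<and> P ((j mod (2*n) + 1) mod (2*n)) - P (j mod (2*n))
        = lam (j mod (2*n)) *\<^sub>R (U ((j mod (2*n) + 1) mod (2*n)) - U (j mod (2*n)))"
      using sides two_n_pos by simp
    then show ?thesis
      by (simp only: Suc_mod_mod) (simp add: lc_def Pc_def edge_def Uc_def algebra_simps)
  qed
  then show ?thesis
    by (simp add: edges_parallel_def Pc_def)
qed

lemma Pc_periodic: "Pc (j + 2*n) = Pc j"
  by (rule edges_parallel_periodic[OF edges_parallel_Pc])

lemma Uc_in_UU: "Uc k \<in> UU"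
  unfolding UU_def Uc_def using two_n_pos by (intro hull_inc) auto

lemma Pc_in_PP: "Pc k \<in> PP"
  unfolding PP_def Pc_def using two_n_pos by (intro hull_inc) auto

lemma UU_det2_le: "(\<And>k. det2 (Uc k) v \<le> b) \<Longrightarrow> x \<in> UU \<Longrightarrow> det2 x v \<le> b"
  unfolding UU_def by (rule det2_le_on_convex_hull) (auto simp: Uc_def, metis mod_less)

lemma PP_det2_le: "(\<And>k. det2 (Pc k) v \<le> b) \<Longrightarrow> x \<in> PP \<Longrightarrow> det2 x v \<le> b"
  unfolding PP_def by (rule det2_le_on_convex_hull) (auto simp: Pc_def, metis mod_less)

lemma dual_norm_eq_vertex:
  "(\<And>k. det2 (Uc k) v \<le> det2 (Uc J) v) \<Longrightarrow> dual_norm UU v = det2 (Uc J) v"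
  unfolding dual_norm_def by (rule cSup_eq_maximum) (use Uc_in_UU UU_det2_le in auto)

lemma supp_eq_vertex:
  "(\<And>k. det2 (Pc k) v \<le> det2 (Pc J) v) \<Longrightarrow> supp PP v = det2 (Pc J) v"
  unfolding supp_def by (rule cSup_eq_maximum) (use Pc_in_PP PP_det2_le in auto)

lemma width_eq_vertices:
  assumes "\<And>k. det2 (Pc k) v \<le> det2 (Pc J) v" "\<And>k. det2 (Pc J') v \<le> det2 (Pc k) v"
  shows "width PP v = det2 (Pc J - Pc J') v"
  using supp_eq_vertex[of v J] supp_eq_vertex[of "- v" J'] assms by (simp add: width_def)

lemma mem_DD_iff: "x \<in> DD \<longleftrightarrow> (\<exists>p\<in>PP. \<exists>q\<in>PP. x = p - q)"
  unfolding DD_def by force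

lemma support_at_extremal_vertex:
  obtains J where "dual_norm UU v = det2 (Uc J) v"
    and "width PP v = det2 (Pc J - Pc (J + n)) v"
    and "\<forall>x\<in>UU. det2 (Uc (J + n)) v \<le> det2 x v \<and> det2 x v \<le> det2 (Uc J) v"
    and "\<forall>x\<in>DD. det2 x v \<le> det2 (Pc J - Pc (J + n)) v"
    and "Pc J - Pc (J + n) \<in> DD"
proof -
  obtain J where J: "\<And>Q l k. edges_parallel Q l \<Longrightarrow>
      det2 (Q (J + n)) v \<le> det2 (Q k) v \<and> det2 (Q k) v \<le> det2 (Q J) v"
    using common_extremal_vertex[of v] by blast
  note U_ext = J[OF edges_parallel_Uc] and P_ext = J[OF edges_parallel_Pc]
  show ?thesis
  proof
    show "dual_norm UU v = det2 (Uc J) v"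
      using U_ext by (intro dual_norm_eq_vertex) blast
    show "width PP v = det2 (Pc J - Pc (J + n)) v"
      using P_ext by (intro width_eq_vertices) blast+
    show "\<forall>x\<in>UU. det2 (Uc (J + n)) v \<le> det2 x v \<and> det2 x v \<le> det2 (Uc J) v"
      using UU_det2_le[of v "det2 (Uc J) v"] UU_det2_le[of "- v" "- det2 (Uc (J + n)) v"] U_ext
      by fastforce
    show "\<forall>x\<in>DD. det2 x v \<le> det2 (Pc J - Pc (J + n)) v"
      using PP_det2_le[of v "det2 (Pc J) v"] PP_det2_le[of "- v" "- det2 (Pc (J + n)) v"] P_ext
      by (fastforce simp: mem_DD_iff)
    show "Pc J - Pc (J + n) \<in> DD"
      using Pc_in_PP by (auto simp: mem_DD_iff)
  qed
qed

lemma dual_norm_uminus: "dual_norm UU (- v) = dual_norm UU v"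
proof -
  obtain J where "dual_norm UU v = det2 (Uc J) v"
      "\<forall>x\<in>UU. det2 (Uc (J + n)) v \<le> det2 x v \<and> det2 x v \<le> det2 (Uc J) v"
    by (rule support_at_extremal_vertex)
  then have "dual_norm UU (- v) = det2 (Uc (J + n)) (- v)"
    using Uc_in_UU by (intro dual_norm_eq_vertex) simp
  with \<open>dual_norm UU v = det2 (Uc J) v\<close> show ?thesis
    by (simp add: Uc_antipodal)
qed

definition proportional_diagonals :: "real \<Rightarrow> bool" where
  "proportional_diagonals c \<longleftrightarrow> (\<forall>j. Pc j - Pc (j + n) = c *\<^sub>R Uc j)"

lemma diagonal_step:
  "Pc (Suc j) - Pc (Suc j + n) = Pc j - Pc (j + n) + (lc j + lc (j + n)) *\<^sub>R edge j"
  using edges_parallel_step[OF edges_parallel_Pc, of j] edges_parallel_step[OF edges_parallel_Pc, of "j + n"]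
  by (simp add: edge_antipodal algebra_simps)

lemma support_at_edge_normal:
  assumes "r > 0"
  shows "dual_norm UU (r *\<^sub>R edge i) = r * det2 (Uc i) (edge i)"
    and "width PP (r *\<^sub>R edge i) = r * det2 (Pc i - Pc (i + n)) (edge i)"
proof -
  note U_max = edges_parallel_max_at_edge[OF edges_parallel_Uc]
  note P_max = edges_parallel_max_at_edge[OF edges_parallel_Pc]
  and P_min = edges_parallel_min_at_edge[OF edges_parallel_Pc]
  show "dual_norm UU (r *\<^sub>R edge i) = r * det2 (Uc i) (edge i)"
    using assms U_max by (subst dual_norm_eq_vertex[of _ i]) (simp_all add: mult_left_mono)
  show "width PP (r *\<^sub>R edge i) = r * det2 (Pc i - Pc (i + n)) (edge i)"
    using assms P_max P_min
    by (subst width_eq_vertices[of _ i "i + n"]) (simp_all add: mult_left_mono algebra_simps)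
qed

text \<open>At the unit normal of the \<open>i\<close>-th edge of \<open>U\<close> the width of \<open>P\<close> is attained by
  the vertices \<open>Pc i\<close> and \<open>Pc (i + n)\<close>.\<close>
lemma const_width_det2_diagonal_edge:
  assumes "const_width UU PP"
  obtains c where "\<And>i. det2 (Pc i - Pc (i + n)) (edge i) = c * det2 (Uc i) (edge i)"
proof -
  obtain c where c: "\<And>v. dual_norm UU v = 1 \<Longrightarrow> width PP v = c"
    using assms by (auto simp: const_width_def)
  have "det2 (Pc i - Pc (i + n)) (edge i) = c * det2 (Uc i) (edge i)" for i
  proof -
    define \<delta> where "\<delta> = det2 (Uc i) (edge i)"
    have "\<delta> > 0"
      unfolding \<delta>_def by (rule det2_vertex_edge_pos)
    then have "dual_norm UU ((1 / \<delta>) *\<^sub>R edge i) = 1"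
      by (simp add: support_at_edge_normal \<delta>_def)
    then have "(1 / \<delta>) * det2 (Pc i - Pc (i + n)) (edge i) = c"
      using c support_at_edge_normal(2)[of "1 / \<delta>" i] \<open>\<delta> > 0\<close> by simp
    with \<open>\<delta> > 0\<close> show ?thesis
      by (simp add: \<delta>_def field_simps)
  qed
  then show ?thesis ..
qed

text \<open>The defect \<open>w j\<close> of the \<open>j\<close>-th diagonal from \<open>c *\<^sub>R Uc j\<close> moves along \<open>edge j\<close> from
  \<open>j\<close> to \<open>j + 1\<close>, so being parallel to both \<open>edge j\<close> and \<open>edge (j + 1)\<close> it vanishes.\<close>
lemma proportional_diagonals_if_det2_diagonal_edge:
  assumes "\<And>i. det2 (Pc i - Pc (i + n)) (edge i) = c * det2 (Uc i) (edge i)"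
  shows "proportional_diagonals c"
proof -
  define w where "w j = Pc j - Pc (j + n) - c *\<^sub>R Uc j" for j
  have w_edge: "det2 (w j) (edge j) = 0" for j
    using assms[of j] by (simp add: w_def)
  have w_Suc: "w (Suc j) = w j + (lc j + lc (j + n) - c) *\<^sub>R edge j" for j
  proof -
    have "Uc (Suc j) = Uc j + edge j"
      by (simp add: edge_def)
    then show ?thesis
      unfolding w_def diagonal_step by (simp add: algebra_simps)
  qed
  have "w (Suc j) = 0" for j
  proof (rule det2_eq_0_imp_zero)
    show "det2 (edge j) (edge (Suc j)) \<noteq> 0"
      using det2_consecutive_edges_pos[of j] by simp
    show "det2 (w (Suc j)) (edge j) = 0"
      unfolding w_Suc using w_edge[of j] by simp
  qed (rule w_edge)
  moreover have "w (j + 2*n) = w j" for j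
    using Pc_periodic[of j] Pc_periodic[of "j + n"] Uc_periodic[of j]
    by (simp add: w_def add.commute add.left_commute)
  moreover have "j + 2*n = Suc (j + (2*n - 1))" for j
    using two_n_pos by simp
  ultimately have "w j = 0" for j
    by metis
  then show ?thesis
    by (simp add: proportional_diagonals_def w_def)
qed

lemma const_width_imp_proportional_diagonals:
  "const_width UU PP \<Longrightarrow> \<exists>c. proportional_diagonals c"
  by (metis const_width_det2_diagonal_edge proportional_diagonals_if_det2_diagonal_edge)

lemma proportional_diagonals_imp_const_width:
  assumes "proportional_diagonals c"
  shows "const_width UU PP"
  unfolding const_width_def
proof (intro exI allI impI)
  fix v assume "dual_norm UU v = 1"
  moreover obtain J where "dual_norm UU v = det2 (Uc J) v" "width PP v = det2 (Pc J - Pc (J + n)) v"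
    by (rule support_at_extremal_vertex)
  moreover have "Pc J - Pc (J + n) = c *\<^sub>R Uc J"
    using assms by (simp add: proportional_diagonals_def)
  ultimately show "width PP v = c"
    by (metis det2_scaleR_left mult.right_neutral)
qed

lemma const_width_iff_proportional_diagonals:
  "const_width UU PP \<longleftrightarrow> (\<exists>c. proportional_diagonals c)"
  using const_width_imp_proportional_diagonals proportional_diagonals_imp_const_width by blast

lemma proportional_diagonals_pos:
  assumes "interior PP \<noteq> {}" and c: "proportional_diagonals c"
  shows "c > 0"
proof -
  have diag: "Pc j - Pc (j + n) = c *\<^sub>R Uc j" for j
    using c by (simp add: proportional_diagonals_def)
  have "det2 (Pc (0 + n)) (edge 0) \<le> det2 (Pc 0) (edge 0)"
    by (rule edges_parallel_min_at_edge[OF edges_parallel_Pc])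
  then have "c * det2 (Uc 0) (edge 0) \<ge> 0"
    using diag[of 0] by (metis det2_diff_left det2_scaleR_left diff_ge_0_iff_ge)
  then have "c \<ge> 0"
    using det2_vertex_edge_pos[of 0] by (simp add: zero_le_mult_iff)
  moreover have "c \<noteq> 0"
  proof
    assume "c = 0"
    have "lc j = 0" for j
    proof -
      have "(lc j + lc (j + n)) *\<^sub>R edge j = 0"
        using diagonal_step[of j] diag[of j] diag[of "Suc j"] \<open>c = 0\<close> by simp
      then have "lc j + lc (j + n) = 0"
        using edge_nonzero by simp
      moreover have "lc j \<ge> 0" "lc (j + n) \<ge> 0"
        by (simp_all add: edges_parallel_nonneg[OF edges_parallel_Pc])
      ultimately show ?thesis
        by linarith
    qed
    then have "Pc j = Pc 0" for j
      by (induction j) (simp_all add: edges_parallel_step[OF edges_parallel_Pc])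
    then have "P ` {..<2*n} = {P 0}"
      using two_n_pos by (auto simp: Pc_def image_iff) (metis mod_less)
    then show False
      using assms(1) by (simp add: PP_def)
  qed
  ultimately show ?thesis
    by simp
qed

lemma convex_UU: "convex UU" and compact_UU: "compact UU"
  by (simp_all add: UU_def finite_imp_compact_convex_hull)

lemma convex_DD: "convex DD" and compact_DD: "compact DD"
proof -
  have "convex PP" "compact PP"
    by (simp_all add: PP_def finite_imp_compact_convex_hull)
  moreover have "DD = (\<Union>x\<in>PP. \<Union>y\<in>(\<lambda>x. - x) ` PP. {x + y})"
    unfolding DD_def by blast
  ultimately show "convex DD" "compact DD"
    by (metis convex_sums convex_negations, metis compact_sums' compact_negations)
qed

text \<open>Both \<open>DD\<close> and \<open>c \<cdot> UU\<close> have their extreme points in direction \<open>v\<close> at corresponding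
  vertices, so by separation neither can stick out of the other.\<close>
lemma proportional_diagonals_imp_homothetic:
  assumes "interior PP \<noteq> {}" and c: "proportional_diagonals c"
  shows "homothetic DD UU"
proof -
  have "c > 0"
    using proportional_diagonals_pos[OF assms] .
  have diag: "Pc j - Pc (j + n) = c *\<^sub>R Uc j" for j
    using c by (simp add: proportional_diagonals_def)
  have "DD = (\<lambda>x. c *\<^sub>R x) ` UU"
  proof
    show "DD \<subseteq> (\<lambda>x. c *\<^sub>R x) ` UU"
    proof (rule subset_convex_compact_by_det2)
      fix v
      obtain J where "\<forall>x\<in>DD. det2 x v \<le> det2 (Pc J - Pc (J + n)) v"
        by (rule support_at_extremal_vertex)
      then show "\<exists>b\<in>(\<lambda>x. c *\<^sub>R x) ` UU. \<forall>x\<in>DD. det2 x v \<le> det2 b v"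
        using Uc_in_UU[of J] diag[of J] by (metis image_eqI)
    qed (simp_all add: convex_UU compact_UU convex_scaling compact_scaling)
    show "(\<lambda>x. c *\<^sub>R x) ` UU \<subseteq> DD"
    proof (rule subset_convex_compact_by_det2[OF convex_DD compact_DD])
      fix v
      obtain J where "\<forall>x\<in>UU. det2 x v \<le> det2 (Uc J) v" "Pc J - Pc (J + n) \<in> DD"
        by (rule support_at_extremal_vertex) blast+
      then show "\<exists>b\<in>DD. \<forall>x\<in>(\<lambda>x. c *\<^sub>R x) ` UU. det2 x v \<le> det2 b v"
        using \<open>c > 0\<close> diag[of J] by (auto intro!: bexI[of _ "Pc J - Pc (J + n)"] mult_left_mono)
    qed
  qed
  with \<open>c > 0\<close> show ?thesis
    unfolding homothetic_def by (intro exI[of _ c] exI[of _ 0]) simp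
qed

lemma homothetic_width:
  assumes "a \<noteq> 0" and hom: "DD = (\<lambda>x. t + a *\<^sub>R x) ` UU"
  shows "width PP v = det2 t v + \<bar>a\<bar> * dual_norm UU v"
proof -
  obtain J where J: "dual_norm UU v = det2 (Uc J) v" "width PP v = det2 (Pc J - Pc (J + n)) v"
    "\<forall>x\<in>UU. det2 (Uc (J + n)) v \<le> det2 x v \<and> det2 x v \<le> det2 (Uc J) v"
    "\<forall>x\<in>DD. det2 x v \<le> det2 (Pc J - Pc (J + n)) v" "Pc J - Pc (J + n) \<in> DD"
    by (rule support_at_extremal_vertex)
  define u where "u = (if a > 0 then Uc J else Uc (J + n))"
  have a_UU_le: "a * det2 x v \<le> \<bar>a\<bar> * det2 (Uc J) v" if "x \<in> UU" for x
  proof (cases "a > 0")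
    case False
    then have "a * det2 x v \<le> a * det2 (Uc (J + n)) v"
      using J(3) that by (simp add: mult_left_mono_neg)
    with False show ?thesis
      by (simp add: Uc_antipodal)
  qed (use J(3) that in \<open>simp add: mult_left_mono\<close>)
  have "a * det2 u v = \<bar>a\<bar> * det2 (Uc J) v"
    using assms(1) by (auto simp: u_def Uc_antipodal)
  moreover have "t + a *\<^sub>R u \<in> DD"
    unfolding hom u_def using Uc_in_UU by (auto intro: imageI)
  ultimately have "det2 t v + \<bar>a\<bar> * det2 (Uc J) v \<le> width PP v"
    using J(2,4) by fastforce
  moreover obtain x where "x \<in> UU" "Pc J - Pc (J + n) = t + a *\<^sub>R x"
    using J(5) hom by auto
  then have "width PP v \<le> det2 t v + \<bar>a\<bar> * det2 (Uc J) v"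
    using J(2) a_UU_le by simp
  ultimately show ?thesis
    unfolding J(1) by linarith
qed

lemma homothetic_imp_const_width:
  assumes "homothetic DD UU"
  shows "const_width UU PP"
proof -
  obtain a t where "a \<noteq> 0" "DD = (\<lambda>x. t + a *\<^sub>R x) ` UU"
    using assms by (auto simp: homothetic_def)
  note width = homothetic_width[OF this]
  show ?thesis
    unfolding const_width_def
  proof (intro exI allI impI)
    fix v assume "dual_norm UU v = 1"
    text \<open>Comparing \<open>v\<close> with \<open>- v\<close> eliminates the translation \<open>t\<close>.\<close>
    then have "width PP v = det2 t v + \<bar>a\<bar>" "width PP v = - det2 t v + \<bar>a\<bar>"
      using width[of v] width[of "- v"] dual_norm_uminus[of v] by (simp_all add: width_def)
    then show "width PP v = \<bar>a\<bar>"
      by linarith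
  qed
qed

lemma homothetic_iff_proportional_diagonals:
  "interior PP \<noteq> {} \<Longrightarrow> homothetic DD UU \<longleftrightarrow> (\<exists>c. proportional_diagonals c)"
  using proportional_diagonals_imp_homothetic homothetic_imp_const_width
    const_width_imp_proportional_diagonals by blast

lemma proportional_diagonals_of_half:
  assumes "\<And>j. j < n \<Longrightarrow> Pc j - Pc (j + n) = c *\<^sub>R Uc j"
  shows "proportional_diagonals c"
  unfolding proportional_diagonals_def
proof
  fix j
  define r where "r = j mod (2*n)"
  have "Pc j = Pc r" "Uc j = Uc r" "Pc (j + n) = Pc (r + n)"
    using edges_parallel_mod[OF edges_parallel_Pc] Uc_mod unfolding r_def by (metis mod_add_left_eq)+
  moreover have "Pc r - Pc (r + n) = c *\<^sub>R Uc r"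
  proof (cases "r < n")
    case False
    then obtain r' where r': "r = r' + n" "r' < n"
      using two_n_pos by (metis add.commute le_Suc_ex mod_less_divisor mult_2 nat_add_left_cancel_less
          not_less r_def)
    then have "Pc r - Pc (r + n) = - (Pc r' - Pc (r' + n))"
      using Pc_periodic[of r'] by (simp add: mult_2 add.assoc)
    with r' assms[of r'] show ?thesis
      using Uc_antipodal[of r'] by simp
  qed (use assms in simp)
  ultimately show "Pc j - Pc (j + n) = c *\<^sub>R Uc j"
    by simp
qed

text \<open>Walking along the edges, the diagonal \<open>Pc j - Pc (j + n)\<close> changes by a multiple of
  \<open>edge j = Uc (j + 1) - Uc j\<close>; if it is parallel to \<open>Uc j\<close> before and to \<open>Uc (j + 1)\<close>
  after, that multiple equals its coefficient, which therefore stays constant.\<close>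
lemma parallel_diagonals_proportional_on_half:
  assumes par: "\<And>j. j < n \<Longrightarrow> det2 (Pc j - Pc (j + n)) (Uc j) = 0"
  obtains c where "\<And>j. j < n \<Longrightarrow> Pc j - Pc (j + n) = c *\<^sub>R Uc j"
proof -
  have turn: "det2 (Uc j) (Uc (Suc j)) > 0" for j
    using det2_vertex_edge_pos[of j] by (simp add: edge_def)
  define c where "c = det2 (Pc 0 - Pc (0 + n)) (Uc 1) / det2 (Uc 0) (Uc 1)"
  have "j < n \<Longrightarrow> Pc j - Pc (j + n) = c *\<^sub>R Uc j" for j
  proof (induction j)
    case 0
    show ?case
      unfolding c_def
      using det2_eq_0_imp_scaleR[of "Uc 0" "Uc 1" "Pc 0 - Pc (0 + n)"] turn[of 0] par[OF 0] by simp
  next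
    case (Suc j)
    define s where "s = lc j + lc (j + n)"
    have step: "Pc (Suc j) - Pc (Suc j + n) = c *\<^sub>R Uc j + s *\<^sub>R (Uc (Suc j) - Uc j)"
      using diagonal_step[of j] Suc by (simp add: s_def edge_def)
    have "det2 (c *\<^sub>R Uc j + s *\<^sub>R (Uc (Suc j) - Uc j)) (Uc (Suc j)) = 0"
      using par[OF Suc.prems] by (simp only: step)
    then have "(c - s) * det2 (Uc j) (Uc (Suc j)) = 0"
      by (simp add: algebra_simps)
    then have "c = s"
      using turn[of j] by simp
    with step show ?case
      by (simp add: algebra_simps)
  qed
  then show ?thesis ..
qed

lemma diagonal_P_eq: "i < n \<Longrightarrow> P i - P (i + n) = Pc i - Pc (i + n)"
  by (simp add: Pc_def)

lemma diagonal_U_eq: "i < n \<Longrightarrow> U i - U (i + n) = 2 *\<^sub>R Uc i"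
  using Uc_antipodal[of i] by (simp add: Uc_def scaleR_2)

lemma parallel_diagonals_iff_proportional_diagonals:
  "(\<forall>i<n. parallel (P i - P (i + n)) (U i - U (i + n))) \<longleftrightarrow> (\<exists>c. proportional_diagonals c)"
proof
  assume "\<forall>i<n. parallel (P i - P (i + n)) (U i - U (i + n))"
  then have "det2 (Pc j - Pc (j + n)) (Uc j) = 0" if "j < n" for j
    using that by (simp add: parallel_def diagonal_P_eq diagonal_U_eq)
  then show "\<exists>c. proportional_diagonals c"
    by (metis parallel_diagonals_proportional_on_half proportional_diagonals_of_half)
next
  assume "\<exists>c. proportional_diagonals c"
  then obtain c where "\<And>j. Pc j - Pc (j + n) = c *\<^sub>R Uc j"
    by (auto simp: proportional_diagonals_def)
  then show "\<forall>i<n. parallel (P i - P (i + n)) (U i - U (i + n))"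
    by (simp add: parallel_def diagonal_P_eq diagonal_U_eq)
qed

lemma scaled_diagonals_iff_proportional_diagonals:
  "(\<exists>a. \<forall>i<n. P i - P (i + n) = (2 * a) *\<^sub>R (U i - U (i + n))) \<longleftrightarrow> (\<exists>c. proportional_diagonals c)"
proof
  assume "\<exists>a. \<forall>i<n. P i - P (i + n) = (2 * a) *\<^sub>R (U i - U (i + n))"
  then obtain a where "\<forall>i<n. P i - P (i + n) = (2 * a) *\<^sub>R (U i - U (i + n))"
    by blast
  then have "proportional_diagonals (4 * a)"
    by (intro proportional_diagonals_of_half) (simp add: diagonal_P_eq diagonal_U_eq)
  then show "\<exists>c. proportional_diagonals c" ..
next
  assume "\<exists>c. proportional_diagonals c"
  then obtain c where "proportional_diagonals c" ..
  then show "\<exists>a. \<forall>i<n. P i - P (i + n) = (2 * a) *\<^sub>R (U i - U (i + n))"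
    by (intro exI[of _ "c / 4"]) (simp add: proportional_diagonals_def diagonal_P_eq diagonal_U_eq)
qed

end

theorem corollary2p6:
  fixes n :: nat and U P :: "nat \<Rightarrow> real^2" and lam :: "nat \<Rightarrow> real"
  assumes n2: "n \<ge> 2"
    and U_distinct: "inj_on U {..<2*n}"
    and U_convex_ccw: "\<forall>i<2*n. \<forall>j<2*n. j \<noteq> i \<and> j \<noteq> (i+1) mod (2*n) \<longrightarrow>
                          det2 (U ((i+1) mod (2*n)) - U i) (U j - U i) > 0"
    and U_sym: "\<forall>i<2*n. U ((i+n) mod (2*n)) = - U i"
    and P_interior: "interior (convex hull (P ` {..<2*n})) \<noteq> {}"
    and P_sides: "\<forall>i<2*n. lam i \<ge> 0 \<and>
                    P ((i+1) mod (2*n)) - P i = lam i *\<^sub>R (U ((i+1) mod (2*n)) - U i)"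
  shows "let UU = convex hull (U ` {..<2*n}); PP = convex hull (P ` {..<2*n}) in
    (const_width UU PP \<longleftrightarrow> homothetic {p + q | p q. p \<in> PP \<and> q \<in> uminus ` PP} UU) \<and>
    (const_width UU PP \<longleftrightarrow> (\<forall>i<n. parallel (P i - P (i+n)) (U i - U (i+n)))) \<and>
    (const_width UU PP \<longleftrightarrow> (\<exists>a. \<forall>i<n. P i - P (i+n) = (2*a) *\<^sub>R (U i - U (i+n))))"
proof -
  \<comment> \<open>\<open>U_distinct\<close> is implied by \<open>U_convex_ccw\<close> and not needed.\<close>
  interpret parallel_polygon n U P lam
    using n2 U_convex_ccw U_sym P_sides by unfold_locales
  have "interior PP \<noteq> {}"
    using P_interior by (simp add: PP_def)
  then show ?thesis
    unfolding Let_def UU_def[symmetric] PP_def[symmetric] DD_def[symmetric]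
    using const_width_iff_proportional_diagonals homothetic_iff_proportional_diagonals
      parallel_diagonals_iff_proportional_diagonals scaled_diagonals_iff_proportional_diagonals
    by simp
qed

end
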